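(* In the setting described in the context, fix $\eta=\delta+iy$ with $\delta\in(0,s_0)$ and let $F(\cdot,\cdot,\eta)$ be a classical solution on $[0,T]\times\Lambda$ of $$\partial_tF+\mu(\lambda)\partial_\lambda F+\lambda\int_0^\infty\big(e^{\eta x}F(t,\lambda+\beta x,\eta)-F(t,\lambda,\eta)\big)\tilde\nu(\lambda,dx)-rF=0,\qquad F(T,\lambda,\eta)\equiv1,$$ (values of $F$ at arguments outside $\Lambda$ being given by clamped extension). Let $(F^n)_{n=0}^N$ be produced by the IMEX scheme $AF^n=F^{n+1}+\Delta t\,N^\Delta_{\exp}[F^{n+1}]$, $n=N-1,\dots,0$, with $F^N_i=1$ for all $i$. Assume the explicit CFL condition $\Delta t\,L_{\exp}(\delta)\le c<1$. Define the local truncation residual by $$\tau^n_i:=\frac{F(t_{n+1},\lambda_i)-F(t_n,\lambda_i)}{\Delta t}-\frac{\big(A\,F(t_n,\cdot)\big)_i-F(t_n,\lambda_i)}{\Delta t}+\big(N^\Delta_{\exp}[F(t_{n+1},\cdot)]\big)_i,$$ and assume $\max_{0\le n\le N-1}\|\tau^n\|_{\infty,\Lambda}\le\bar\tau$. Then there exists $C_T<\infty$ depending only on $T$, $r$ and $L_{\exp}(\delta)$ such that for all $n=0,\dots,N$, $$\|F^n-F(t_n,\cdot,\eta)\|_{\infty,\Lambda}\le C_T\,\bar\tau.$$ In particular the scheme converges whenever $\bar\tau\to0$.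
   Context: Fix $T>0$, $r\ge0$, $\beta\ge0$, a drift $\mu:\mathbb R_+\to\mathbb R$, a compact interval $\Lambda=[\lambda_{\min},\lambda_{\max}]\subset[0,\infty)$ and a probability kernel $\tilde\nu(\lambda,dx)$ on $(0,\infty)$, with $s_0>0$ such that $\sup_{\lambda\in\Lambda}\int_0^\infty e^{sx}\tilde\nu(\lambda,dx)<\infty$ for all $s\in[0,s_0)$. Grid: $\lambda_i=\lambda_{\min}+ih$, $i=0,\dots,I$, $\lambda_I=\lambda_{\max}$; $\Delta t=T/N$, $t_n=n\Delta t$. $\mu_i=\mu(\lambda_i)$, $\mu_i^\pm$ its positive/negative parts ($\mu_i^-=\min(\mu_i,0)$). $A$ is the tridiagonal matrix $A=I-\Delta t L^\Delta_{\rm imp}$ with $A_{i,i}=1+\Delta t\big(\frac{\mu_i^+-\mu_i^-}{h}+r\big)$, $A_{i,i-1}=\Delta t\mu_i^-/h$ ($i\ge1$), $A_{i,i+1}=-\Delta t\mu_i^+/h$ ($i\le I-1$), so that $-(AV-V)/\Delta t$ is the upwind discretisation of $\mu\partial_\lambda V-rV$. For a grid vector $V$, $\Pi_{\Delta\lambda}[V]$ is the PCHIP (Fritsch–Carlson) interpolant on $\Lambda$ extended to $[0,\infty)$ by clamping; $(N^\Delta_{\exp}[V])_i=\lambda_i\big(\int_0^\infty e^{\eta x}\Pi_{\Delta\lambda}[V](\lambda_i+\beta x)\tilde\nu(\lambda_i,dx)-V_i\big)$. $\|V\|_{\infty,\Lambda}=\max_i|V_i|$; $L_{\exp}(\delta)=\sup_i\lambda_i\big(\int_0^\infty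 e^{\delta x}\tilde\nu(\lambda_i,dx)+1\big)$. *)

theory Defs
  imports "HOL-Probability.Probability"
begin

definition grid_h :: "real \<Rightarrow> real \<Rightarrow> nat \<Rightarrow> real" where
  "grid_h lmin lmax I = (lmax - lmin) / real I"

definition grid_pt :: "real \<Rightarrow> real \<Rightarrow> nat \<Rightarrow> nat \<Rightarrow> real" where
  "grid_pt lmin lmax I i = lmin + real i * grid_h lmin lmax I"

definition time_pt :: "real \<Rightarrow> nat \<Rightarrow> nat \<Rightarrow> real" where
  "time_pt T N n = real n * (T / real N)"

definition norm_grid :: "nat \<Rightarrow> (nat \<Rightarrow> complex) \<Rightarrow> real" where
  "norm_grid I V = Max ((\<lambda>i. cmod (V i)) ` {0..I})"

definition pchip_secant :: "real \<Rightarrow> real \<Rightarrow> nat \<Rightarrow> (nat \<Rightarrow> real) \<Rightarrow> nat \<Rightarrow> real" where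
  "pchip_secant lmin lmax I y k = (y (Suc k) - y k) / grid_h lmin lmax I"

text \<open>Shape-preserving one-sided three-point end slope (d computed from
  the adjacent secant m0 and the next one m1).\<close>
definition pchip_end_slope :: "real \<Rightarrow> real \<Rightarrow> real" where
  "pchip_end_slope m0 m1 =
     (let d = (3 * m0 - m1) / 2 in
      if sgn d \<noteq> sgn m0 then 0
      else if sgn m0 \<noteq> sgn m1 \<and> \<bar>d\<bar> > 3 * \<bar>m0\<bar> then 3 * m0
      else d)"

definition pchip_slope :: "real \<Rightarrow> real \<Rightarrow> nat \<Rightarrow> (nat \<Rightarrow> real) \<Rightarrow> nat \<Rightarrow> real" where
  "pchip_slope lmin lmax I y k =
     (let m = pchip_secant lmin lmax I y in
      if I = 1 then m 0
      else if k = 0 then pchip_end_slope (m 0) (m 1)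
      else if k = I then pchip_end_slope (m (I - 1)) (m (I - 2))
      else if m (k - 1) * m k > 0 then 2 * m (k - 1) * m k / (m (k - 1) + m k)
      else 0)"

definition pchip_real :: "real \<Rightarrow> real \<Rightarrow> nat \<Rightarrow> (nat \<Rightarrow> real) \<Rightarrow> real \<Rightarrow> real" where
  "pchip_real lmin lmax I y x =
     (let h = grid_h lmin lmax I;
          x' = max lmin (min lmax x);
          k = min (nat \<lfloor>(x' - lmin) / h\<rfloor>) (I - 1);
          s = (x' - grid_pt lmin lmax I k) / h;
          d = pchip_slope lmin lmax I y
      in y k * (2 * s^3 - 3 * s^2 + 1) + h * d k * (s^3 - 2 * s^2 + s)
         + y (Suc k) * (- 2 * s^3 + 3 * s^2) + h * d (Suc k) * (s^3 - s^2))"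

definition pchip :: "real \<Rightarrow> real \<Rightarrow> nat \<Rightarrow> (nat \<Rightarrow> complex) \<Rightarrow> real \<Rightarrow> complex" where
  "pchip lmin lmax I V x =
     Complex (pchip_real lmin lmax I (\<lambda>i. Re (V i)) x) (pchip_real lmin lmax I (\<lambda>i. Im (V i)) x)"

definition Amat :: "real \<Rightarrow> real \<Rightarrow> nat \<Rightarrow> real \<Rightarrow> (real \<Rightarrow> real) \<Rightarrow> real \<Rightarrow> nat \<Rightarrow> nat \<Rightarrow> real" where
  "Amat lmin lmax I dt mu r i j =
     (let h = grid_h lmin lmax I;
          mp = max (mu (grid_pt lmin lmax I i)) 0;
          mm = min (mu (grid_pt lmin lmax I i)) 0
      in if j = i then 1 + dt * ((mp - mm) / h + r)
         else if 1 \<le> i \<and> j = i - 1 then dt * mm / h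
         else if i + 1 \<le> I \<and> j = i + 1 then - dt * mp / h
         else 0)"

definition Amul :: "real \<Rightarrow> real \<Rightarrow> nat \<Rightarrow> real \<Rightarrow> (real \<Rightarrow> real) \<Rightarrow> real \<Rightarrow> (nat \<Rightarrow> complex) \<Rightarrow> nat \<Rightarrow> complex" where
  "Amul lmin lmax I dt mu r V i = (\<Sum>j = 0..I. complex_of_real (Amat lmin lmax I dt mu r i j) * V j)"

definition Nexp :: "real \<Rightarrow> real \<Rightarrow> nat \<Rightarrow> real \<Rightarrow> (real \<Rightarrow> real measure) \<Rightarrow> complex
                    \<Rightarrow> (nat \<Rightarrow> complex) \<Rightarrow> nat \<Rightarrow> complex" where
  "Nexp lmin lmax I beta nu eta V i =
     (let l = grid_pt lmin lmax I i in
      complex_of_real l *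
        ((LINT x|nu l. exp (eta * complex_of_real x) * pchip lmin lmax I V (l + beta * x)) - V i))"

definition Lexp :: "real \<Rightarrow> real \<Rightarrow> nat \<Rightarrow> (real \<Rightarrow> real measure) \<Rightarrow> real \<Rightarrow> real" where
  "Lexp lmin lmax I nu d =
     Max ((\<lambda>i. grid_pt lmin lmax I i *
                 ((LINT x|nu (grid_pt lmin lmax I i). exp (d * x)) + 1)) ` {0..I})"

definition prob_kernel_on :: "real set \<Rightarrow> (real \<Rightarrow> real measure) \<Rightarrow> bool" where
  "prob_kernel_on L nu \<longleftrightarrow>
     (\<forall>l\<in>L. prob_space (nu l) \<and> sets (nu l) = sets borel \<and> emeasure (nu l) {..0} = 0) \<and>
     (\<forall>A\<in>sets borel. (\<lambda>l. emeasure (nu l) A) \<in> borel_measurable (restrict_space borel L))"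

definition exp_moments :: "real set \<Rightarrow> (real \<Rightarrow> real measure) \<Rightarrow> real \<Rightarrow> bool" where
  "exp_moments L nu s0 \<longleftrightarrow>
     (\<forall>s. 0 \<le> s \<and> s < s0 \<longrightarrow> (SUP l\<in>L. \<integral>\<^sup>+ x. ennreal (exp (s * x)) \<partial>nu l) < \<infinity>)"

definition clamp_ext :: "real \<Rightarrow> real \<Rightarrow> (real \<Rightarrow> complex) \<Rightarrow> real \<Rightarrow> complex" where
  "clamp_ext lmin lmax G x = G (max lmin (min lmax x))"

definition classical_solution ::
  "real \<Rightarrow> real \<Rightarrow> real \<Rightarrow> real \<Rightarrow> real \<Rightarrow> (real \<Rightarrow> real) \<Rightarrow> (real \<Rightarrow> real measure) \<Rightarrow> complex
   \<Rightarrow> (real \<Rightarrow> real \<Rightarrow> complex) \<Rightarrow> bool" where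
  "classical_solution T r beta lmin lmax mu nu eta F \<longleftrightarrow>
     continuous_on ({0..T} \<times> {lmin..lmax}) (\<lambda>(t, l). F t l) \<and>
     (\<forall>t\<in>{0..T}. \<forall>l\<in>{lmin..lmax}. \<exists>Ft Fl.
        ((\<lambda>s. F s l) has_vector_derivative Ft) (at t within {0..T}) \<and>
        ((\<lambda>m. F t m) has_vector_derivative Fl) (at l within {lmin..lmax}) \<and>
        continuous_on ({0..T} \<times> {lmin..lmax}) (\<lambda>(s, m). vector_derivative (\<lambda>s'. F s' m) (at s within {0..T})) \<and>
        continuous_on ({0..T} \<times> {lmin..lmax}) (\<lambda>(s, m). vector_derivative (\<lambda>m'. F s m') (at m within {lmin..lmax})) \<and>
        integrable (nu l) (\<lambda>x. exp (eta * complex_of_real x) * clamp_ext lmin lmax (F t) (l + beta * x)) \<and>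
        Ft + complex_of_real (mu l) * Fl
          + complex_of_real l * ((LINT x|nu l. exp (eta * complex_of_real x) * clamp_ext lmin lmax (F t) (l + beta * x)) - F t l)
          - complex_of_real r * F t l = 0) \<and>
     (\<forall>l\<in>{lmin..lmax}. F T l = 1)"

definition imex_scheme ::
  "real \<Rightarrow> nat \<Rightarrow> real \<Rightarrow> real \<Rightarrow> real \<Rightarrow> real \<Rightarrow> nat \<Rightarrow> (real \<Rightarrow> real) \<Rightarrow> (real \<Rightarrow> real measure) \<Rightarrow> complex
   \<Rightarrow> (nat \<Rightarrow> nat \<Rightarrow> complex) \<Rightarrow> bool" where
  "imex_scheme T N r beta lmin lmax I mu nu eta Fn \<longleftrightarrow>
     (\<forall>i\<le>I. Fn N i = 1) \<and>
     (\<forall>n<N. \<forall>i\<le>I. Amul lmin lmax I (T / real N) mu r (Fn n) i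
                    = Fn (Suc n) i + complex_of_real (T / real N) * Nexp lmin lmax I beta nu eta (Fn (Suc n)) i)"

definition residual ::
  "real \<Rightarrow> nat \<Rightarrow> real \<Rightarrow> real \<Rightarrow> real \<Rightarrow> real \<Rightarrow> nat \<Rightarrow> (real \<Rightarrow> real) \<Rightarrow> (real \<Rightarrow> real measure) \<Rightarrow> complex
   \<Rightarrow> (real \<Rightarrow> real \<Rightarrow> complex) \<Rightarrow> nat \<Rightarrow> nat \<Rightarrow> complex" where
  "residual T N r beta lmin lmax I mu nu eta F n i =
     (let dt = T / real N;
          Gn = (\<lambda>j. F (time_pt T N n) (grid_pt lmin lmax I j));
          Gn1 = (\<lambda>j. F (time_pt T N (Suc n)) (grid_pt lmin lmax I j))
      in (Gn1 i - Gn i) / complex_of_real dt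
         - (Amul lmin lmax I dt mu r Gn i - Gn i) / complex_of_real dt
         + Nexp lmin lmax I beta nu eta Gn1 i)"

end

(*
  The grid error e^n = F^n - F(t_n, .) satisfies the scheme itself, forced by the residual:
    A e^n = e^(n+1) + dt (N[F^(n+1)] - N[F(t_(n+1), .)]) + dt tau^n.
  Two stability facts turn this into a recursion for the sup norm. The upwind matrix A is
  row diagonally dominant with margin 1, hence ||V|| <= ||A V||. The explicit jump operator is
  Lipschitz with constant 34 L_exp(delta): the PCHIP interpolant is nonlinear, but the
  Fritsch-Carlson node slopes are Lipschitz functions of the secants and the Hermite value weights
  form a partition of unity, so interpolation is 17-Lipschitz in the sup norm for real data and
  34-Lipschitz for complex data. Hence ||e^n|| <= (1 + 34 L dt) ||e^(n+1)|| + dt taubar with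
  e^N = 0, and a backward discrete Gronwall argument gives ||e^n|| <= T exp(34 L T) taubar.
*)
theory Submission
  imports Defs
begin

lemma grid_h_pos: "lmin < lmax \<Longrightarrow> I \<ge> 1 \<Longrightarrow> grid_h lmin lmax I > 0"
  unfolding grid_h_def by simp

lemma grid_pt_in_interval:
  assumes "lmin < lmax" "I \<ge> 1" "i \<le> I"
  shows "grid_pt lmin lmax I i \<in> {lmin..lmax}"
proof -
  have "real i * grid_h lmin lmax I \<le> real I * grid_h lmin lmax I"
    using assms grid_h_pos[OF assms(1,2)] by (intro mult_right_mono) auto
  then show ?thesis
    using assms grid_h_pos[OF assms(1,2)] by (simp add: grid_pt_def grid_h_def)
qed

lemma norm_grid_ge: "i \<le> I \<Longrightarrow> cmod (V i) \<le> norm_grid I V"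
  unfolding norm_grid_def by (rule Max_ge) auto

lemma norm_grid_le: "(\<And>i. i \<le> I \<Longrightarrow> cmod (V i) \<le> B) \<Longrightarrow> norm_grid I V \<le> B"
  unfolding norm_grid_def by (subst Max_le_iff) auto

lemma norm_grid_attained: "\<exists>i\<le>I. norm_grid I V = cmod (V i)"
proof -
  have "norm_grid I V \<in> (\<lambda>i. cmod (V i)) ` {0..I}"
    unfolding norm_grid_def by (rule Max_in) auto
  then show ?thesis by auto
qed

lemma norm_grid_nonneg: "0 \<le> norm_grid I V"
  using norm_grid_ge[of 0 I V] norm_ge_zero order_trans by blast

section \<open>Lipschitz continuity of the PCHIP interpolant\<close>

definition hmean :: "real \<Rightarrow> real \<Rightarrow> real" where
  "hmean a b = (if a * b > 0 then 2 * a * b / (a + b) else 0)"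

lemma hmean_commute: "hmean a b = hmean b a"
  by (simp add: hmean_def mult.commute add.commute)

lemma hmean_uminus: "hmean (- a) (- b) = - hmean a b"
  by (simp add: hmean_def field_simps) (simp add: add.commute minus_divide_right)

lemma hmean_eq_0: "a * b \<le> 0 \<Longrightarrow> hmean a b = 0"
  by (simp add: hmean_def)

text \<open>For \<open>b > 0\<close> the map \<open>a \<mapsto> hmean a b\<close> vanishes for \<open>a \<le> 0\<close> and has derivative
  \<open>2 b\<^sup>2 / (a + b)\<^sup>2 \<le> 2\<close> for \<open>a > 0\<close>.\<close>
lemma hmean_lipschitz_left_pos:
  fixes a a' b :: real
  assumes "b > 0"
  shows "\<bar>hmean a b - hmean a' b\<bar> \<le> 2 * \<bar>a - a'\<bar>"
proof -
  have pos: "\<bar>hmean a b - hmean a' b\<bar> \<le> 2 * \<bar>a - a'\<bar>" if "a > 0" "a' > 0" for a a'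
  proof -
    define q where "q = b^2 / ((a + b) * (a' + b))"
    have "0 \<le> q" "q \<le> 1"
      using that assms by (simp_all add: q_def divide_le_eq_1 power2_eq_square mult_mono)
    have "hmean a b - hmean a' b = 2 * (a - a') * q"
      using that assms by (simp add: hmean_def q_def field_simps power2_eq_square)
    then have "\<bar>hmean a b - hmean a' b\<bar> = 2 * \<bar>a - a'\<bar> * q"
      using \<open>0 \<le> q\<close> by (simp only: abs_mult abs_of_nonneg)
    also have "\<dots> \<le> 2 * \<bar>a - a'\<bar>"
      using \<open>q \<le> 1\<close> by (simp add: mult_left_le)
    finally show ?thesis .
  qed
  have vanish: "\<bar>hmean a b - hmean a' b\<bar> \<le> 2 * \<bar>a - a'\<bar>" if "a > 0" "a' \<le> 0" for a a'
  proof -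
    have "hmean a' b = 0"
      using that assms by (simp add: hmean_eq_0 mult_nonpos_nonneg)
    moreover have "0 \<le> hmean a b" "hmean a b \<le> 2 * a"
      using that assms by (simp_all add: hmean_def divide_le_eq algebra_simps)
    ultimately show ?thesis using that by simp
  qed
  consider "a > 0" "a' > 0" | "a > 0" "a' \<le> 0" | "a \<le> 0" "a' > 0" | "a \<le> 0" "a' \<le> 0"
    by linarith
  then show ?thesis
  proof cases
    case 3
    then show ?thesis using vanish[of a' a] by (simp add: abs_minus_commute)
  next
    case 4
    then show ?thesis using assms by (simp add: hmean_eq_0 mult_nonpos_nonneg)
  qed (use pos vanish in auto)
qed

lemma hmean_lipschitz_left: "\<bar>hmean a b - hmean a' b\<bar> \<le> 2 * \<bar>a - a'\<bar>"
proof (cases b "0::real" rule: linorder_cases)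
  case less
  then show ?thesis
    using hmean_lipschitz_left_pos[of "- b" "- a" "- a'"] by (simp add: hmean_uminus abs_minus_commute)
next
  case equal
  then show ?thesis by (simp add: hmean_def)
next
  case greater
  then show ?thesis by (simp add: hmean_lipschitz_left_pos)
qed

lemma hmean_lipschitz: "\<bar>hmean a b - hmean a' b'\<bar> \<le> 2 * \<bar>a - a'\<bar> + 2 * \<bar>b - b'\<bar>"
  using hmean_lipschitz_left[of a b a'] hmean_lipschitz_left[of b' a' b]
  by (simp add: hmean_commute[of _ a'] abs_minus_commute)

lemma abs_max_diff_le: "\<bar>x - x'\<bar> \<le> e \<Longrightarrow> \<bar>y - y'\<bar> \<le> e \<Longrightarrow> \<bar>max x y - max x' y'\<bar> \<le> (e::real)"
  by (auto simp: max_def abs_le_iff)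

lemma abs_min_diff_le: "\<bar>x - x'\<bar> \<le> e \<Longrightarrow> \<bar>y - y'\<bar> \<le> e \<Longrightarrow> \<bar>min x y - min x' y'\<bar> \<le> (e::real)"
  by (auto simp: min_def abs_le_iff)

text \<open>The two shape-preserving corrections of the three-point end slope just clamp it
  between \<open>0\<close> and \<open>3 * m0\<close>; in this form it is visibly Lipschitz.\<close>
lemma pchip_end_slope_median:
  "pchip_end_slope a b = max (min 0 (3 * a)) (min (max 0 (3 * a)) ((3 * a - b) / 2))"
proof -
  define d where "d = (3 * a - b) / 2"
  have "pchip_end_slope a b = (if sgn d \<noteq> sgn a then 0
      else if sgn a \<noteq> sgn b \<and> \<bar>d\<bar> > 3 * \<bar>a\<bar> then 3 * a else d)"
    unfolding pchip_end_slope_def Let_def d_def by simp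
  also have "\<dots> = max (min 0 (3 * a)) (min (max 0 (3 * a)) d)"
  proof (cases a "0::real" rule: linorder_cases)
    case less
    then show ?thesis by (cases "b < 0"; cases "d < 0") (auto simp: sgn_real_def d_def)
  next
    case equal
    then show ?thesis by (auto simp: sgn_real_def d_def)
  next
    case greater
    then show ?thesis by (cases "b > 0"; cases "d > 0") (auto simp: sgn_real_def d_def)
  qed
  finally show ?thesis unfolding d_def .
qed

lemma pchip_end_slope_lipschitz:
  fixes a a' b b' e :: real
  assumes "\<bar>a - a'\<bar> \<le> e" "\<bar>b - b'\<bar> \<le> e"
  shows "\<bar>pchip_end_slope a b - pchip_end_slope a' b'\<bar> \<le> 3 * e"
proof -
  have "\<bar>(3 * a - b) / 2 - (3 * a' - b') / 2\<bar> \<le> 3 * e"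
    using assms by (simp add: abs_le_iff field_simps)
  moreover have "\<bar>(0::real) - 0\<bar> \<le> 3 * e" "\<bar>3 * a - 3 * a'\<bar> \<le> 3 * e"
    using assms by (simp_all add: abs_le_iff)
  ultimately show ?thesis
    unfolding pchip_end_slope_median by (intro abs_max_diff_le abs_min_diff_le)
qed

lemma pchip_slope_hmean:
  "pchip_slope lmin lmax I y k =
     (let m = pchip_secant lmin lmax I y in
      if I = 1 then m 0
      else if k = 0 then pchip_end_slope (m 0) (m 1)
      else if k = I then pchip_end_slope (m (I - 1)) (m (I - 2))
      else hmean (m (k - 1)) (m k))"
  unfolding pchip_slope_def hmean_def Let_def by simp

lemma pchip_slope_lipschitz:
  assumes "I \<ge> 1" "k \<le> I"
    and secant: "\<And>j. j < I \<Longrightarrow> \<bar>pchip_secant lmin lmax I y j - pchip_secant lmin lmax I z j\<bar> \<le> e"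
  shows "\<bar>pchip_slope lmin lmax I y k - pchip_slope lmin lmax I z k\<bar> \<le> 4 * e"
proof -
  let ?my = "pchip_secant lmin lmax I y" and ?mz = "pchip_secant lmin lmax I z"
  have "0 \<le> e" using secant[of 0] assms(1) by linarith
  consider "I = 1" | "I \<ge> 2" "k = 0" | "I \<ge> 2" "k = I" | "I \<ge> 2" "0 < k" "k < I"
    using assms(1,2) by linarith
  then show ?thesis
  proof cases
    case 1
    then show ?thesis using secant[of 0] \<open>0 \<le> e\<close> by (simp add: pchip_slope_hmean Let_def)
  next
    case 2
    have "\<bar>pchip_end_slope (?my 0) (?my 1) - pchip_end_slope (?mz 0) (?mz 1)\<bar> \<le> 3 * e"
      by (rule pchip_end_slope_lipschitz) (use secant 2 in auto)
    then show ?thesis using 2 \<open>0 \<le> e\<close> by (simp add: pchip_slope_hmean Let_def)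
  next
    case 3
    have "\<bar>pchip_end_slope (?my (I - 1)) (?my (I - 2)) - pchip_end_slope (?mz (I - 1)) (?mz (I - 2))\<bar> \<le> 3 * e"
      by (rule pchip_end_slope_lipschitz) (use secant 3 in auto)
    then show ?thesis using 3 \<open>0 \<le> e\<close> by (simp add: pchip_slope_hmean Let_def)
  next
    case 4
    have "\<bar>?my (k - 1) - ?mz (k - 1)\<bar> \<le> e" "\<bar>?my k - ?mz k\<bar> \<le> e"
      using secant 4 by simp_all
    then have "\<bar>hmean (?my (k - 1)) (?my k) - hmean (?mz (k - 1)) (?mz k)\<bar> \<le> 4 * e"
      using hmean_lipschitz[of "?my (k - 1)" "?my k" "?mz (k - 1)" "?mz k"] by linarith
    then show ?thesis using 4 by (simp add: pchip_slope_hmean Let_def)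
  qed
qed

lemma pchip_secant_lipschitz:
  assumes "grid_h lmin lmax I > 0" "Suc j \<le> I" "\<forall>i\<le>I. \<bar>y i - z i\<bar> \<le> B"
  shows "\<bar>pchip_secant lmin lmax I y j - pchip_secant lmin lmax I z j\<bar> \<le> 2 * B / grid_h lmin lmax I"
proof -
  have "\<bar>y (Suc j) - z (Suc j)\<bar> \<le> B" "\<bar>y j - z j\<bar> \<le> B"
    using assms(2,3) by auto
  then have "\<bar>(y (Suc j) - y j) - (z (Suc j) - z j)\<bar> \<le> 2 * B"
    by linarith
  then show ?thesis
    using assms(1) unfolding pchip_secant_def diff_divide_distrib[symmetric] abs_divide
    by (simp add: divide_right_mono)
qed

definition hermite_cubic :: "real \<Rightarrow> real \<Rightarrow> real \<Rightarrow> real \<Rightarrow> real \<Rightarrow> real" where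
  "hermite_cubic u0 d0 u1 d1 s =
     u0 * (2 * s^3 - 3 * s^2 + 1) + d0 * (s^3 - 2 * s^2 + s) + u1 * (- 2 * s^3 + 3 * s^2) + d1 * (s^3 - s^2)"

lemma hermite_cubic_diff:
  "hermite_cubic u0 d0 u1 d1 s - hermite_cubic u0' d0' u1' d1' s
     = hermite_cubic (u0 - u0') (d0 - d0') (u1 - u1') (d1 - d1') s"
  by (simp add: hermite_cubic_def algebra_simps)

lemma abs_hermite_cubic_le:
  fixes s :: real
  assumes "0 \<le> s" "s \<le> 1" "\<bar>u0\<bar> \<le> B" "\<bar>u1\<bar> \<le> B" "\<bar>d0\<bar> \<le> D" "\<bar>d1\<bar> \<le> D"
  shows "\<bar>hermite_cubic u0 d0 u1 d1 s\<bar> \<le> B + 2 * D"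
proof -
  define h00 h10 h01 h11 where "h00 = (1 - s)^2 * (1 + 2 * s)" and "h10 = s * (1 - s)^2"
    and "h01 = s^2 * (3 - 2 * s)" and "h11 = - (s^2 * (1 - s))"
  have hermite: "hermite_cubic u0 d0 u1 d1 s = u0 * h00 + d0 * h10 + u1 * h01 + d1 * h11"
    by (simp add: hermite_cubic_def h00_def h10_def h01_def h11_def algebra_simps power2_eq_square power3_eq_cube)
  have "h00 + h01 = 1"
    by (simp add: h00_def h01_def algebra_simps power2_eq_square)
  have "0 \<le> h00" "0 \<le> h01"
    using assms(1,2) by (simp_all add: h00_def h01_def)
  have "(1 - s)^2 \<le> 1" "s^2 \<le> 1"
    using assms(1,2) by (simp_all add: power_le_one abs_le_iff)
  then have "\<bar>h10\<bar> \<le> 1" "\<bar>h11\<bar> \<le> 1"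
    using assms(1,2) by (simp_all add: h10_def h11_def abs_mult mult_le_one)
  have "\<bar>u0 * h00 + u1 * h01\<bar> \<le> B * h00 + B * h01"
    using assms(3,4) \<open>0 \<le> h00\<close> \<open>0 \<le> h01\<close>
    by (intro order_trans[OF abs_triangle_ineq add_mono]) (simp_all add: abs_mult mult_right_mono)
  moreover have "\<bar>d0 * h10\<bar> \<le> D * 1" "\<bar>d1 * h11\<bar> \<le> D * 1"
    unfolding abs_mult using assms(5,6) \<open>\<bar>h10\<bar> \<le> 1\<close> \<open>\<bar>h11\<bar> \<le> 1\<close>
    by (intro mult_mono; simp)+
  moreover have "B * h00 + B * h01 = B"
    using \<open>h00 + h01 = 1\<close> by (simp add: distrib_left[symmetric])
  ultimately show ?thesis
    unfolding hermite by linarith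
qed

lemma pchip_real_cell:
  assumes "lmin < lmax" "I \<ge> 1"
  obtains k s where "k < I" "0 \<le> s" "s \<le> 1"
    "\<And>y. pchip_real lmin lmax I y x =
       hermite_cubic (y k) (grid_h lmin lmax I * pchip_slope lmin lmax I y k)
         (y (Suc k)) (grid_h lmin lmax I * pchip_slope lmin lmax I y (Suc k)) s"
proof -
  define h where "h = grid_h lmin lmax I"
  define q where "q = (max lmin (min lmax x) - lmin) / h"
  define k where "k = min (nat \<lfloor>q\<rfloor>) (I - 1)"
  have "h > 0" unfolding h_def using grid_h_pos[OF assms] .
  have "0 \<le> q" "q \<le> real I"
    using \<open>h > 0\<close> assms by (simp_all add: q_def h_def grid_h_def field_simps)
  have "0 \<le> q - real k \<and> q - real k \<le> 1"
  proof (cases "nat \<lfloor>q\<rfloor> \<le> I - 1")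
    case True
    then have "real k = of_int \<lfloor>q\<rfloor>" using \<open>0 \<le> q\<close> by (simp add: k_def)
    then show ?thesis by linarith
  next
    case False
    then have "q = real I" using \<open>q \<le> real I\<close> by linarith
    then show ?thesis using False \<open>I \<ge> 1\<close> by (simp add: k_def of_nat_diff)
  qed
  moreover have "pchip_real lmin lmax I y x =
       hermite_cubic (y k) (h * pchip_slope lmin lmax I y k)
         (y (Suc k)) (h * pchip_slope lmin lmax I y (Suc k)) (q - real k)" for y
  proof -
    have "(max lmin (min lmax x) - grid_pt lmin lmax I k) / h = q - real k"
      using \<open>h > 0\<close> by (simp add: q_def grid_pt_def h_def[symmetric] field_simps)
    then show ?thesis
      unfolding pchip_real_def hermite_cubic_def Let_def h_def[symmetric] q_def[symmetric] k_def[symmetric]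
      by simp
  qed
  moreover have "k < I" using \<open>I \<ge> 1\<close> by (simp add: k_def)
  ultimately show ?thesis using that unfolding h_def by blast
qed

text \<open>The constant is \<open>1 + 2 * 8\<close>: the value weights of the Hermite cubic form a partition of unity,
  and the node slopes, scaled by \<open>h\<close>, move by at most \<open>4 * (2 * B / h) * h\<close>.\<close>
lemma pchip_real_lipschitz:
  assumes "lmin < lmax" "I \<ge> 1" and B: "\<forall>i\<le>I. \<bar>y i - z i\<bar> \<le> B"
  shows "\<bar>pchip_real lmin lmax I y x - pchip_real lmin lmax I z x\<bar> \<le> 17 * B"
proof -
  let ?h = "grid_h lmin lmax I"
  have "?h > 0" using grid_h_pos[OF assms(1,2)] .
  have slope: "\<bar>?h * pchip_slope lmin lmax I y k - ?h * pchip_slope lmin lmax I z k\<bar> \<le> 8 * B"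
    if "k \<le> I" for k
  proof -
    have "\<bar>pchip_slope lmin lmax I y k - pchip_slope lmin lmax I z k\<bar> \<le> 4 * (2 * B / ?h)"
      by (rule pchip_slope_lipschitz[OF assms(2) that])
        (rule pchip_secant_lipschitz[OF \<open>?h > 0\<close> _ B], simp)
    then show ?thesis
      using \<open>?h > 0\<close> by (simp add: abs_mult right_diff_distrib[symmetric] le_divide_eq mult.commute)
  qed
  obtain k s where "k < I" "0 \<le> s" "s \<le> 1" and cell:
    "\<And>y. pchip_real lmin lmax I y x =
       hermite_cubic (y k) (?h * pchip_slope lmin lmax I y k)
         (y (Suc k)) (?h * pchip_slope lmin lmax I y (Suc k)) s"
    using pchip_real_cell[OF assms(1,2)] by metis
  show ?thesis
    unfolding cell hermite_cubic_diff
    using abs_hermite_cubic_le[OF \<open>0 \<le> s\<close> \<open>s \<le> 1\<close>, of _ B _ _ "8 * B"] slope B \<open>k < I\<close>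
    by simp
qed

lemma pchip_lipschitz:
  assumes "lmin < lmax" "I \<ge> 1"
  shows "cmod (pchip lmin lmax I V x - pchip lmin lmax I W x) \<le> 34 * norm_grid I (\<lambda>i. V i - W i)"
proof -
  let ?B = "norm_grid I (\<lambda>i. V i - W i)"
  have "\<bar>Re (V i) - Re (W i)\<bar> \<le> ?B" "\<bar>Im (V i) - Im (W i)\<bar> \<le> ?B" if "i \<le> I" for i
    using abs_Re_le_cmod[of "V i - W i"] abs_Im_le_cmod[of "V i - W i"] norm_grid_ge[OF that, of "\<lambda>i. V i - W i"]
    by simp_all
  then have "\<bar>Re (pchip lmin lmax I V x - pchip lmin lmax I W x)\<bar> \<le> 17 * ?B"
    "\<bar>Im (pchip lmin lmax I V x - pchip lmin lmax I W x)\<bar> \<le> 17 * ?B"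
    unfolding pchip_def by (simp_all add: pchip_real_lipschitz[OF assms])
  then show ?thesis
    using cmod_le[of "pchip lmin lmax I V x - pchip lmin lmax I W x"] by linarith
qed

lemma pchip_slope_zero: "pchip_slope lmin lmax I (\<lambda>i. 0) k = 0"
  by (simp add: pchip_slope_hmean pchip_secant_def pchip_end_slope_median hmean_def Let_def)

lemma pchip_zero:
  assumes "lmin < lmax" "I \<ge> 1"
  shows "pchip lmin lmax I (\<lambda>i. 0) x = 0"
proof -
  obtain k s where "pchip_real lmin lmax I (\<lambda>i. 0) x = hermite_cubic 0 0 0 0 s"
    using pchip_real_cell[OF assms, of x] pchip_slope_zero by (metis mult_zero_right)
  then show ?thesis
    by (simp add: pchip_def hermite_cubic_def complex_eq_iff)
qed

lemma pchip_norm_le: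
  assumes "lmin < lmax" "I \<ge> 1"
  shows "cmod (pchip lmin lmax I V x) \<le> 34 * norm_grid I V"
  using pchip_lipschitz[OF assms, where V = V and W = "\<lambda>i. 0" and x = x] by (simp add: pchip_zero[OF assms])

lemma pchip_real_measurable [measurable]: "pchip_real lmin lmax I y \<in> borel_measurable borel"
proof -
  define cell where "cell x = min (nat \<lfloor>(max lmin (min lmax x) - lmin) / grid_h lmin lmax I\<rfloor>) (I - 1)"
    for x
  define on_cell where "on_cell k x =
    hermite_cubic (y k) (grid_h lmin lmax I * pchip_slope lmin lmax I y k)
      (y (Suc k)) (grid_h lmin lmax I * pchip_slope lmin lmax I y (Suc k))
      ((max lmin (min lmax x) - grid_pt lmin lmax I k) / grid_h lmin lmax I)" for k x
  have "pchip_real lmin lmax I y = (\<lambda>x. on_cell (cell x) x)"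
    by (simp add: fun_eq_iff pchip_real_def hermite_cubic_def on_cell_def cell_def Let_def)
  moreover have "cell \<in> borel \<rightarrow>\<^sub>M count_space UNIV"
    unfolding cell_def by measurable
  moreover have "on_cell k \<in> borel_measurable borel" for k
    unfolding on_cell_def hermite_cubic_def by measurable
  ultimately show ?thesis
    by (simp add: measurable_compose_countable')
qed

lemma pchip_measurable [measurable]: "pchip lmin lmax I V \<in> borel_measurable borel"
  unfolding pchip_def Complex_eq by measurable

section \<open>The explicit jump operator\<close>

lemma exp_moments_integrable:
  assumes "prob_kernel_on L nu" "exp_moments L nu s0" "l \<in> L" "0 \<le> s" "s < s0"
  shows "integrable (nu l) (\<lambda>x. exp (s * x))"
proof (rule integrableI_bounded)
  have sets: "sets (nu l) = sets borel"
    using assms(1,3) by (simp add: prob_kernel_on_def)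
  show "(\<lambda>x. exp (s * x)) \<in> borel_measurable (nu l)"
    unfolding measurable_cong_sets[OF sets refl] by measurable
  have "(\<integral>\<^sup>+ x. ennreal (exp (s * x)) \<partial>nu l) \<le> (SUP l\<in>L. \<integral>\<^sup>+ x. ennreal (exp (s * x)) \<partial>nu l)"
    using assms(3) by (rule SUP_upper)
  also have "\<dots> < \<infinity>"
    using assms(2,4,5) by (simp add: exp_moments_def)
  finally show "(\<integral>\<^sup>+ x. ennreal (norm (exp (s * x))) \<partial>nu l) < \<infinity>"
    by simp
qed

lemma jump_integrand_integrable:
  assumes "lmin < lmax" "I \<ge> 1" "prob_kernel_on {lmin..lmax} nu" "exp_moments {lmin..lmax} nu s0"
    "0 \<le> Re eta" "Re eta < s0" "l \<in> {lmin..lmax}"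
  shows "integrable (nu l) (\<lambda>x. exp (eta * complex_of_real x) * pchip lmin lmax I V (l + beta * x))"
proof (rule Bochner_Integration.integrable_bound)
  show "integrable (nu l) (\<lambda>x. exp (Re eta * x) * (34 * norm_grid I V))"
    using exp_moments_integrable[OF assms(3,4,7,5,6)] by simp
  have sets: "sets (nu l) = sets borel"
    using assms(3,7) by (simp add: prob_kernel_on_def)
  show "(\<lambda>x. exp (eta * complex_of_real x) * pchip lmin lmax I V (l + beta * x)) \<in> borel_measurable (nu l)"
    unfolding measurable_cong_sets[OF sets refl] by measurable
  show "AE x in nu l. norm (exp (eta * complex_of_real x) * pchip lmin lmax I V (l + beta * x))
          \<le> norm (exp (Re eta * x) * (34 * norm_grid I V))"
    using pchip_norm_le[OF assms(1,2)] norm_grid_nonneg[of I V]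
    by (simp add: norm_mult mult_left_mono)
qed

lemma jump_integral_lipschitz:
  assumes "lmin < lmax" "I \<ge> 1" "prob_kernel_on {lmin..lmax} nu" "exp_moments {lmin..lmax} nu s0"
    "0 \<le> Re eta" "Re eta < s0" "l \<in> {lmin..lmax}"
  shows "cmod ((LINT x|nu l. exp (eta * complex_of_real x) * pchip lmin lmax I V (l + beta * x))
               - (LINT x|nu l. exp (eta * complex_of_real x) * pchip lmin lmax I W (l + beta * x)))
           \<le> (LINT x|nu l. exp (Re eta * x)) * (34 * norm_grid I (\<lambda>j. V j - W j))"
proof -
  define g where "g U x = exp (eta * complex_of_real x) * pchip lmin lmax I U (l + beta * x)" for U x
  have int: "integrable (nu l) (g U)" for U
    unfolding g_def using jump_integrand_integrable[OF assms] .
  have "cmod (LINT x|nu l. g V x - g W x)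
      \<le> (LINT x|nu l. exp (Re eta * x) * (34 * norm_grid I (\<lambda>j. V j - W j)))"
  proof (rule Bochner_Integration.integral_norm_bound_integral)
    show "integrable (nu l) (\<lambda>x. exp (Re eta * x) * (34 * norm_grid I (\<lambda>j. V j - W j)))"
      using exp_moments_integrable[OF assms(3,4,7,5,6)] by simp
    show "cmod (g V x - g W x) \<le> exp (Re eta * x) * (34 * norm_grid I (\<lambda>j. V j - W j))" for x
      using pchip_lipschitz[OF assms(1,2), of V "l + beta * x" W]
      by (simp add: g_def norm_mult right_diff_distrib[symmetric])
  qed (simp add: int)
  then show ?thesis
    by (simp add: g_def[symmetric] Bochner_Integration.integral_diff[OF int int])
qed

lemma Lexp_ge:
  "i \<le> I \<Longrightarrow> grid_pt lmin lmax I i * ((LINT x|nu (grid_pt lmin lmax I i). exp (d * x)) + 1) \<le> Lexp lmin lmax I nu d"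
  unfolding Lexp_def by (rule Max_ge) auto

lemma Lexp_nonneg:
  assumes "0 \<le> lmin"
  shows "0 \<le> Lexp lmin lmax I nu d"
proof (rule order_trans[OF _ Lexp_ge[of 0]])
  have "0 \<le> (LINT x|nu (grid_pt lmin lmax I 0). exp (d * x))"
    by (rule integral_nonneg_AE) simp
  then show "0 \<le> grid_pt lmin lmax I 0 * ((LINT x|nu (grid_pt lmin lmax I 0). exp (d * x)) + 1)"
    using assms by (simp add: grid_pt_def)
qed simp

lemma Nexp_lipschitz:
  assumes "lmin < lmax" "I \<ge> 1" "0 \<le> lmin" "prob_kernel_on {lmin..lmax} nu" "exp_moments {lmin..lmax} nu s0"
    "0 \<le> Re eta" "Re eta < s0" "i \<le> I"
  shows "cmod (Nexp lmin lmax I beta nu eta V i - Nexp lmin lmax I beta nu eta W i)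
           \<le> 34 * Lexp lmin lmax I nu (Re eta) * norm_grid I (\<lambda>j. V j - W j)"
proof -
  define l where "l = grid_pt lmin lmax I i"
  define B where "B = norm_grid I (\<lambda>j. V j - W j)"
  define E where "E = (LINT x|nu l. exp (Re eta * x))"
  define J where "J U = (LINT x|nu l. exp (eta * complex_of_real x) * pchip lmin lmax I U (l + beta * x))" for U
  have l: "l \<in> {lmin..lmax}"
    unfolding l_def using grid_pt_in_interval assms(1,2,8) .
  have "0 \<le> B" "0 \<le> l"
    using l assms(3) by (simp_all add: B_def norm_grid_nonneg)
  have "cmod ((J V - J W) - (V i - W i)) \<le> E * (34 * B) + B"
    using jump_integral_lipschitz[OF assms(1,2,4-7) l, of V beta W]
      norm_grid_ge[OF assms(8), of "\<lambda>j. V j - W j"] norm_triangle_ineq4[of "J V - J W" "V i - W i"]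
    unfolding J_def E_def B_def by linarith
  also have "\<dots> \<le> 34 * B * (E + 1)"
    using \<open>0 \<le> B\<close> by (simp add: algebra_simps)
  finally have bound: "cmod ((J V - J W) - (V i - W i)) \<le> 34 * B * (E + 1)" .
  have "Nexp lmin lmax I beta nu eta V i - Nexp lmin lmax I beta nu eta W i
      = complex_of_real l * ((J V - J W) - (V i - W i))"
    unfolding Nexp_def Let_def l_def[symmetric] J_def[symmetric] by (simp add: algebra_simps)
  then have "cmod (Nexp lmin lmax I beta nu eta V i - Nexp lmin lmax I beta nu eta W i)
      \<le> l * (34 * B * (E + 1))"
    using \<open>0 \<le> l\<close> bound by (simp add: norm_mult mult_left_mono)
  also have "\<dots> = 34 * B * (l * (E + 1))"
    by simp
  also have "\<dots> \<le> 34 * B * Lexp lmin lmax I nu (Re eta)"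
    using Lexp_ge[OF assms(8), of lmin lmax nu "Re eta"] \<open>0 \<le> B\<close>
    by (simp add: l_def E_def mult_left_mono)
  finally show ?thesis
    by (simp add: B_def mult.commute mult.left_commute)
qed

section \<open>Stability of the implicit upwind step\<close>

lemma norm_grid_le_diag_dominant:
  fixes a :: "nat \<Rightarrow> nat \<Rightarrow> real"
  assumes dominant: "\<And>i. i \<le> I \<Longrightarrow> 1 + (\<Sum>j\<in>{0..I} - {i}. \<bar>a i j\<bar>) \<le> \<bar>a i i\<bar>"
  shows "norm_grid I E \<le> norm_grid I (\<lambda>i. \<Sum>j = 0..I. complex_of_real (a i j) * E j)"
proof -
  obtain i where i: "i \<le> I" and M: "norm_grid I E = cmod (E i)"
    using norm_grid_attained by blast
  define M where "M = norm_grid I E"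
  define S where "S = (\<Sum>j\<in>{0..I} - {i}. \<bar>a i j\<bar>)"
  have "0 \<le> M" by (simp add: M_def norm_grid_nonneg)
  have off_diagonal: "cmod (\<Sum>j\<in>{0..I} - {i}. complex_of_real (a i j) * E j) \<le> S * M"
  proof -
    have "cmod (\<Sum>j\<in>{0..I} - {i}. complex_of_real (a i j) * E j) \<le> (\<Sum>j\<in>{0..I} - {i}. \<bar>a i j\<bar> * M)"
      by (intro order_trans[OF norm_sum sum_mono])
        (simp add: M_def norm_mult mult_left_mono norm_grid_ge)
    then show ?thesis by (simp add: S_def sum_distrib_right)
  qed
  have "(\<Sum>j = 0..I. complex_of_real (a i j) * E j)
      = complex_of_real (a i i) * E i + (\<Sum>j\<in>{0..I} - {i}. complex_of_real (a i j) * E j)"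
    using i by (subst sum.remove[of _ i]) auto
  then have "\<bar>a i i\<bar> * M - S * M \<le> cmod (\<Sum>j = 0..I. complex_of_real (a i j) * E j)"
    using off_diagonal norm_triangle_ineq2[of "complex_of_real (a i i) * E i"
        "- (\<Sum>j\<in>{0..I} - {i}. complex_of_real (a i j) * E j)"]
    by (simp add: M M_def norm_mult)
  moreover have "M \<le> \<bar>a i i\<bar> * M - S * M"
    using mult_right_mono[of 1 "\<bar>a i i\<bar> - S" M] dominant[OF i] \<open>0 \<le> M\<close>
    by (simp add: S_def left_diff_distrib)
  ultimately show ?thesis
    using norm_grid_ge[OF i, of "\<lambda>i. \<Sum>j = 0..I. complex_of_real (a i j) * E j"] by (simp add: M_def)
qed

text \<open>Upwinding gives every off-diagonal entry the sign opposite to its contribution to the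
  diagonal, so \<open>\<bar>A\<^sub>i\<^sub>i\<bar> \<ge> 1 + \<Delta>t r + \<Sum>\<^sub>j\<^sub>\<noteq>\<^sub>i \<bar>A\<^sub>i\<^sub>j\<bar>\<close>.\<close>
lemma Amat_diag_dominant:
  assumes "lmin < lmax" "I \<ge> 1" "0 \<le> dt" "0 \<le> r" "i \<le> I"
  shows "1 + (\<Sum>j\<in>{0..I} - {i}. \<bar>Amat lmin lmax I dt mu r i j\<bar>) \<le> \<bar>Amat lmin lmax I dt mu r i i\<bar>"
proof -
  define h where "h = grid_h lmin lmax I"
  define up where "up = dt * max (mu (grid_pt lmin lmax I i)) 0 / h"
  define down where "down = dt * - min (mu (grid_pt lmin lmax I i)) 0 / h"
  have "0 < h" unfolding h_def using grid_h_pos[OF assms(1,2)] .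
  then have "0 \<le> up" "0 \<le> down"
    unfolding up_def down_def using assms(3) by (intro divide_nonneg_pos mult_nonneg_nonneg; simp)+
  have "\<bar>Amat lmin lmax I dt mu r i j\<bar> \<le> (if j = i - 1 then down else 0) + (if j = i + 1 then up else 0)"
    if "j \<noteq> i" for j
    using that \<open>0 \<le> up\<close> \<open>0 \<le> down\<close>
    by (auto simp: Amat_def Let_def up_def down_def h_def)
  then have "(\<Sum>j\<in>{0..I} - {i}. \<bar>Amat lmin lmax I dt mu r i j\<bar>)
      \<le> (\<Sum>j\<in>{0..I} - {i}. (if j = i - 1 then down else 0) + (if j = i + 1 then up else 0))"
    by (intro sum_mono) simp
  also have "\<dots> \<le> down + up"
    using \<open>0 \<le> up\<close> \<open>0 \<le> down\<close> by (simp add: sum.distrib sum.delta)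
  finally have "(\<Sum>j\<in>{0..I} - {i}. \<bar>Amat lmin lmax I dt mu r i j\<bar>) \<le> down + up" .
  moreover have "Amat lmin lmax I dt mu r i i = 1 + dt * r + up + down"
    by (simp add: Amat_def Let_def up_def down_def h_def diff_divide_distrib algebra_simps)
  moreover have "0 \<le> dt * r"
    using assms(3,4) by simp
  ultimately show ?thesis
    using \<open>0 \<le> up\<close> \<open>0 \<le> down\<close> by simp
qed

lemma Amul_diff:
  "Amul lmin lmax I dt mu r (\<lambda>j. V j - W j) i = Amul lmin lmax I dt mu r V i - Amul lmin lmax I dt mu r W i"
  by (simp add: Amul_def sum_subtractf right_diff_distrib)

lemma norm_grid_le_Amul:
  assumes "lmin < lmax" "I \<ge> 1" "0 \<le> dt" "0 \<le> r"
  shows "norm_grid I E \<le> norm_grid I (Amul lmin lmax I dt mu r E)"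
  unfolding Amul_def
  by (rule norm_grid_le_diag_dominant) (rule Amat_diag_dominant[OF assms])

section \<open>Error propagation\<close>

lemma backward_discrete_gronwall:
  fixes u :: "nat \<Rightarrow> real"
  assumes "u N \<le> 0" and recursion: "\<And>m. m < N \<Longrightarrow> u m \<le> (1 + h * K) * u (Suc m) + h * b"
    and "0 \<le> h" "0 \<le> K" "0 \<le> b" "n \<le> N"
  shows "u n \<le> real (N - n) * h * b * exp (real (N - n) * h * K)"
  using \<open>n \<le> N\<close>
proof (induction n rule: inc_induct)
  case base
  then show ?case using \<open>u N \<le> 0\<close> by simp
next
  case (step m)
  define k where "k = real (N - Suc m)"
  have k: "real (N - m) = k + 1" "0 \<le> k"
    using step.hyps by (simp_all add: k_def)
  have "0 \<le> k * h * b * exp (k * h * K)"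
    using \<open>0 \<le> k\<close> assms(3,5) by simp
  have "u m \<le> (1 + h * K) * u (Suc m) + h * b"
    using recursion step.hyps by simp
  also have "\<dots> \<le> (1 + h * K) * (k * h * b * exp (k * h * K)) + h * b"
    using step.IH assms(3,4) by (simp add: k_def mult_left_mono)
  also have "\<dots> \<le> exp (h * K) * (k * h * b * exp (k * h * K)) + h * b"
    using exp_ge_add_one_self[of "h * K"] \<open>0 \<le> k * h * b * exp (k * h * K)\<close>
    by (simp add: add.commute mult_right_mono)
  also have "\<dots> = k * h * b * exp ((k + 1) * h * K) + h * b * 1"
    by (simp add: exp_add[symmetric] algebra_simps)
  also have "\<dots> \<le> k * h * b * exp ((k + 1) * h * K) + h * b * exp ((k + 1) * h * K)"
    using \<open>0 \<le> k\<close> assms(3,4,5) by (intro add_left_mono mult_left_mono) simp_all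
  also have "\<dots> = real (N - m) * h * b * exp (real (N - m) * h * K)"
    by (simp add: k algebra_simps)
  finally show ?case .
qed

text \<open>The residual is exactly the defect of the exact grid values in the scheme, so the error
  satisfies the scheme itself, forced by the difference of the jump terms and by the residual.\<close>
lemma imex_error_identity:
  fixes F :: "real \<Rightarrow> real \<Rightarrow> complex"
  assumes "0 < T" "N \<ge> 1" "imex_scheme T N r beta lmin lmax I mu nu eta Fn" "m < N" "i \<le> I"
  defines "dt \<equiv> T / real N" and "G \<equiv> \<lambda>n j. F (time_pt T N n) (grid_pt lmin lmax I j)"
  shows "Amul lmin lmax I dt mu r (\<lambda>j. Fn m j - G m j) i
           = Fn (Suc m) i - G (Suc m) i
             + dt * (Nexp lmin lmax I beta nu eta (Fn (Suc m)) i - Nexp lmin lmax I beta nu eta (G (Suc m)) i)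
             + dt * residual T N r beta lmin lmax I mu nu eta F m i"
proof -
  have "0 < dt" using assms(1,2) by (simp add: dt_def)
  have scheme: "Amul lmin lmax I dt mu r (Fn m) i
      = Fn (Suc m) i + dt * Nexp lmin lmax I beta nu eta (Fn (Suc m)) i"
    using assms(3-5) by (simp add: imex_scheme_def dt_def)
  have "residual T N r beta lmin lmax I mu nu eta F m i
      = (G (Suc m) i - G m i) / dt - (Amul lmin lmax I dt mu r (G m) i - G m i) / dt
        + Nexp lmin lmax I beta nu eta (G (Suc m)) i"
    by (simp add: residual_def Let_def G_def dt_def)
  then have exact: "Amul lmin lmax I dt mu r (G m) i
      = G (Suc m) i + dt * Nexp lmin lmax I beta nu eta (G (Suc m)) i
        - dt * residual T N r beta lmin lmax I mu nu eta F m i"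
    using \<open>0 < dt\<close> by (simp add: field_simps)
  show ?thesis
    unfolding Amul_diff scheme exact by (simp add: algebra_simps)
qed

lemma imex_error_step:
  fixes F :: "real \<Rightarrow> real \<Rightarrow> complex"
  assumes "lmin < lmax" "I \<ge> 1" "0 \<le> lmin" "0 < T" "N \<ge> 1" "0 \<le> r"
    "prob_kernel_on {lmin..lmax} nu" "exp_moments {lmin..lmax} nu s0" "0 \<le> Re eta" "Re eta < s0"
    "imex_scheme T N r beta lmin lmax I mu nu eta Fn" "m < N"
  defines "e \<equiv> \<lambda>n i. Fn n i - F (time_pt T N n) (grid_pt lmin lmax I i)"
  shows "norm_grid I (e m)
           \<le> (1 + T / real N * (34 * Lexp lmin lmax I nu (Re eta))) * norm_grid I (e (Suc m))
             + T / real N * norm_grid I (residual T N r beta lmin lmax I mu nu eta F m)"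
proof -
  define dt where "dt = T / real N"
  define G where "G n = (\<lambda>i. F (time_pt T N n) (grid_pt lmin lmax I i))" for n
  define L where "L = Lexp lmin lmax I nu (Re eta)"
  define res where "res = residual T N r beta lmin lmax I mu nu eta F m"
  have "0 < dt" using assms(4,5) by (simp add: dt_def)
  have "cmod (Amul lmin lmax I dt mu r (e m) i)
      \<le> norm_grid I (e (Suc m)) + dt * (34 * L * norm_grid I (e (Suc m))) + dt * norm_grid I res"
    if "i \<le> I" for i
  proof -
    let ?jump = "Nexp lmin lmax I beta nu eta (Fn (Suc m)) i - Nexp lmin lmax I beta nu eta (G (Suc m)) i"
    have "cmod ?jump \<le> 34 * L * norm_grid I (e (Suc m))"
      using Nexp_lipschitz[OF assms(1,2,3,7,8,9,10) that] by (simp add: L_def e_def G_def)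
    moreover have "cmod (e (Suc m) i) \<le> norm_grid I (e (Suc m))" "cmod (res i) \<le> norm_grid I res"
      using that by (simp_all add: norm_grid_ge)
    moreover have "Amul lmin lmax I dt mu r (e m) i = e (Suc m) i + dt * ?jump + dt * res i"
      using imex_error_identity[OF assms(4,5,11,12) that, of F]
      by (simp add: e_def G_def dt_def res_def)
    ultimately show ?thesis
      using \<open>0 < dt\<close> norm_triangle_ineq[of "e (Suc m) i + dt * ?jump" "dt * res i"]
        norm_triangle_ineq[of "e (Suc m) i" "dt * ?jump"]
      by (simp add: norm_mult) (smt (verit) mult_left_mono)
  qed
  then have "norm_grid I (Amul lmin lmax I dt mu r (e m))
      \<le> (1 + dt * (34 * L)) * norm_grid I (e (Suc m)) + dt * norm_grid I res"
    by (intro norm_grid_le) (simp add: algebra_simps)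
  then show ?thesis
    using norm_grid_le_Amul[OF assms(1,2) less_imp_le[OF \<open>0 < dt\<close>] assms(6), of "e m" mu]
    by (simp add: dt_def res_def L_def)
qed

lemma imex_error_terminal:
  fixes F :: "real \<Rightarrow> real \<Rightarrow> complex"
  assumes "lmin < lmax" "I \<ge> 1" "N \<ge> 1" "imex_scheme T N r beta lmin lmax I mu nu eta Fn"
    "\<forall>l\<in>{lmin..lmax}. F T l = 1"
  shows "norm_grid I (\<lambda>i. Fn N i - F (time_pt T N N) (grid_pt lmin lmax I i)) = 0"
proof (rule antisym[OF norm_grid_le norm_grid_nonneg])
  fix i assume "i \<le> I"
  then have "Fn N i = 1" "F T (grid_pt lmin lmax I i) = 1"
    using assms(4,5) grid_pt_in_interval[OF assms(1,2)] by (simp_all add: imex_scheme_def)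
  moreover have "time_pt T N N = T"
    using assms(3) by (simp add: time_pt_def)
  ultimately show "cmod (Fn N i - F (time_pt T N N) (grid_pt lmin lmax I i)) \<le> 0"
    by simp
qed

lemma imex_error_bound:
  fixes F :: "real \<Rightarrow> real \<Rightarrow> complex"
  assumes "lmin < lmax" "I \<ge> 1" "0 \<le> lmin" "0 < T" "N \<ge> 1" "0 \<le> r"
    "prob_kernel_on {lmin..lmax} nu" "exp_moments {lmin..lmax} nu s0" "0 \<le> Re eta" "Re eta < s0"
    "imex_scheme T N r beta lmin lmax I mu nu eta Fn" "\<forall>l\<in>{lmin..lmax}. F T l = 1"
    "\<forall>m<N. norm_grid I (residual T N r beta lmin lmax I mu nu eta F m) \<le> taubar" "n \<le> N"
  shows "norm_grid I (\<lambda>i. Fn n i - F (time_pt T N n) (grid_pt lmin lmax I i))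
           \<le> T * exp (34 * Lexp lmin lmax I nu (Re eta) * T) * taubar"
proof -
  define e where "e n = (\<lambda>i. Fn n i - F (time_pt T N n) (grid_pt lmin lmax I i))" for n
  define dt where "dt = T / real N"
  define K where "K = 34 * Lexp lmin lmax I nu (Re eta)"
  have "0 < dt" using assms(4,5) by (simp add: dt_def)
  have "0 \<le> K" using Lexp_nonneg[OF assms(3)] by (simp add: K_def)
  have "0 \<le> taubar"
    using assms(5,13) norm_grid_nonneg[of I] order_trans by (metis less_le_trans zero_less_one)
  have terminal: "norm_grid I (e N) \<le> 0"
    using imex_error_terminal[where F = F, OF assms(1,2,5,11,12)] by (simp add: e_def)
  have recursion: "norm_grid I (e m) \<le> (1 + dt * K) * norm_grid I (e (Suc m)) + dt * taubar"
    if "m < N" for m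
  proof -
    have "norm_grid I (e m) \<le> (1 + dt * K) * norm_grid I (e (Suc m))
        + dt * norm_grid I (residual T N r beta lmin lmax I mu nu eta F m)"
      using imex_error_step[OF assms(1-11) that, of F] unfolding e_def dt_def K_def .
    moreover have "dt * norm_grid I (residual T N r beta lmin lmax I mu nu eta F m) \<le> dt * taubar"
      using assms(13) that \<open>0 < dt\<close> by (simp add: mult_left_mono)
    ultimately show ?thesis by linarith
  qed
  have "norm_grid I (e n) \<le> real (N - n) * dt * taubar * exp (real (N - n) * dt * K)"
    by (rule backward_discrete_gronwall[of "\<lambda>m. norm_grid I (e m)", OF terminal recursion])
      (use \<open>0 < dt\<close> \<open>0 \<le> K\<close> \<open>0 \<le> taubar\<close> assms(14) in simp_all)
  also have "\<dots> \<le> T * taubar * exp (T * K)"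
  proof -
    have "real (N - n) * dt \<le> real N * dt"
      using \<open>0 < dt\<close> by (intro mult_right_mono) auto
    then have "real (N - n) * dt \<le> T"
      using assms(5) by (simp add: dt_def)
    moreover have "0 \<le> real (N - n) * dt" using \<open>0 < dt\<close> by simp
    ultimately show ?thesis
      using \<open>0 \<le> K\<close> \<open>0 \<le> taubar\<close> by (intro mult_mono) (simp_all add: mult_right_mono)
  qed
  finally show ?thesis
    unfolding e_def K_def by (simp only: mult_ac)
qed

lemma classical_solution_terminal:
  "classical_solution T r beta lmin lmax mu nu eta F \<Longrightarrow> \<forall>l\<in>{lmin..lmax}. F T l = 1"
  unfolding classical_solution_def by blast

theorem mainTheorem3:
  shows "\<exists>C :: real \<Rightarrow> real \<Rightarrow> real \<Rightarrow> real.
    \<forall>(T::real) (r::real) (beta::real) (mu::real \<Rightarrow> real) (lmin::real) (lmax::real) (I::nat)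
      (nu::real \<Rightarrow> real measure) (s0::real) (\<delta>::real) (y::real) (c::real) (N::nat)
      (F::real \<Rightarrow> real \<Rightarrow> complex) (Fn::nat \<Rightarrow> nat \<Rightarrow> complex) (taubar::real).
      T > 0 \<and> r \<ge> 0 \<and> beta \<ge> 0 \<and> 0 \<le> lmin \<and> lmin < lmax \<and> I \<ge> 1 \<and> N \<ge> 1 \<and>
      s0 > 0 \<and> prob_kernel_on {lmin..lmax} nu \<and> exp_moments {lmin..lmax} nu s0 \<and>
      0 < \<delta> \<and> \<delta> < s0 \<and>
      classical_solution T r beta lmin lmax mu nu (Complex \<delta> y) F \<and>
      imex_scheme T N r beta lmin lmax I mu nu (Complex \<delta> y) Fn \<and>
      c < 1 \<and> (T / real N) * Lexp lmin lmax I nu \<delta> \<le> c \<and>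
      (\<forall>n<N. norm_grid I (residual T N r beta lmin lmax I mu nu (Complex \<delta> y) F n) \<le> taubar)
      \<longrightarrow> (\<forall>n\<le>N. norm_grid I (\<lambda>i. Fn n i - F (time_pt T N n) (grid_pt lmin lmax I i))
                    \<le> C T r (Lexp lmin lmax I nu \<delta>) * taubar)"
proof (intro exI[of _ "\<lambda>T r L. T * exp (34 * L * T)"] allI impI, goal_cases)
  case (1 T r beta mu lmin lmax I nu s0 \<delta> y c N F Fn taubar n)
  then show ?case
    using classical_solution_terminal[of T r beta lmin lmax mu nu "Complex \<delta> y" F]
      imex_error_bound[where eta = "Complex \<delta> y" and r = r and beta = beta and mu = mu and ?s0.0 = s0
        and F = F and Fn = Fn and taubar = taubar and n = n]
    by auto
qed

end
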